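(* Let $G=(V,E)$ be a temporal graph whose edges are listed in a fixed chronological order $e_1,\dots,e_m$ (nondecreasing timestamps), let $\mathcal{P}=(P_1,\dots,P_R)$ be a partition of $V$, fix a level $h$ and positive parameters $\lambda_{ijh}>0$ ($1\le i\le j\le R$). For edges $s,e$ define $y(s,e;h)=\sum_{1\le i\le j\le R}\big(\mathrm{cnt}(P_i,P_j,(t(s),t(e)])\log\lambda_{ijh}-|P_i\times P_j|\,\lambda_{ijh}(t(e)-t(s))\big)$ if $s$ does not come after $e$ in the order, and $y(s,e;h)=-\infty$ otherwise. Let $o:E\to\mathbb{R}\cup\{-\infty\}$ be arbitrary and set $x(s,e)=y(s,e;h)+o(s)$. Then $x$ is totally monotone: for all indices $i_1<i_2$ and $j_1<j_2$, if $x(e_{i_2},e_{j_1})>x(e_{i_1},e_{j_1})$ then $x(e_{i_2},e_{j_2})\ge x(e_{i_1},e_{j_2})$.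
   Context: A temporal graph $G=(V,E)$ consists of a finite node set $V$ and a finite multiset $E$ of undirected edges $(u,v,t)$, $u\ne v$, with timestamp $t\in\mathbb{R}$; $t(e)$ denotes the timestamp of edge $e$. For a time interval $T$ and $U,W\subseteq V$, $\mathrm{cnt}(U,W,T)$ is the number of edges with one endpoint in $U$, the other in $W$ (counting each unordered node pair once, endpoints distinct) and timestamp in $T$; $|U\times W|$ is the number of unordered pairs $\{u,w\}$ with $u\in U$, $w\in W$, $u\ne w$. Thus $y(s,e;h)$ is the Poisson log-likelihood of the segment $(t(s),t(e)]$ under the level-$h$ parameters. In the paper, $o(s)$ plays the role of the optimal log-likelihood of a $(k-1)$-segmentation covering edges up to $s$. *)

theory Defs
  imports Complex_Main "HOL-Library.Extended_Real"
begin

text \<open>A temporal edge (u, v, t): endpoints u, v and timestamp t.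
  The multiset E of edges is given as a list in a fixed chronological order
  e_1, ..., e_m (positions 0 .. m-1 in the list).\<close>
type_synonym 'v tedge = "'v \<times> 'v \<times> real"

definition tm :: "'v tedge \<Rightarrow> real" where
  "tm e = snd (snd e)"

definition temporal_graph :: "'v set \<Rightarrow> 'v tedge list \<Rightarrow> bool" where
  "temporal_graph V E \<longleftrightarrow> finite V \<and>
     (\<forall>(u, v, t) \<in> set E. u \<in> V \<and> v \<in> V \<and> u \<noteq> v)"

definition chronological :: "'v tedge list \<Rightarrow> bool" where
  "chronological E \<longleftrightarrow> sorted (map tm E)"

definition is_partition :: "'v set \<Rightarrow> nat \<Rightarrow> (nat \<Rightarrow> 'v set) \<Rightarrow> bool" where
  "is_partition V R P \<longleftrightarrow>
     (\<forall>i\<in>{1..R}. P i \<noteq> {} \<and> P i \<subseteq> V) \<and>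
     (\<forall>i\<in>{1..R}. \<forall>j\<in>{1..R}. i \<noteq> j \<longrightarrow> P i \<inter> P j = {}) \<and>
     (\<Union>i\<in>{1..R}. P i) = V"

text \<open>cnt(U, W, (a, b]): number of edges (counted with multiplicity, i.e. by position
  in the edge list) with one endpoint in U and the other in W and timestamp in (a, b].\<close>
definition cnt :: "'v tedge list \<Rightarrow> 'v set \<Rightarrow> 'v set \<Rightarrow> real \<Rightarrow> real \<Rightarrow> nat" where
  "cnt E U W a b = card {k. k < length E \<and>
     (case E ! k of (u, v, t) \<Rightarrow>
        u \<noteq> v \<and> a < t \<and> t \<le> b \<and> ((u \<in> U \<and> v \<in> W) \<or> (u \<in> W \<and> v \<in> U)))}"

definition pairs_card :: "'v set \<Rightarrow> 'v set \<Rightarrow> nat" where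
  "pairs_card U W = card {{u, w} | u w. u \<in> U \<and> w \<in> W \<and> u \<noteq> w}"

definition seg_ll :: "'v tedge list \<Rightarrow> nat \<Rightarrow> (nat \<Rightarrow> 'v set) \<Rightarrow>
    (nat \<Rightarrow> nat \<Rightarrow> nat \<Rightarrow> real) \<Rightarrow> nat \<Rightarrow> nat \<Rightarrow> nat \<Rightarrow> ereal" where
  "seg_ll E R P lam h s e =
     (if s \<le> e then
        ereal (\<Sum>i\<in>{1..R}. \<Sum>j\<in>{i..R}.
           real (cnt E (P i) (P j) (tm (E ! s)) (tm (E ! e))) * ln (lam i j h)
           - real (pairs_card (P i) (P j)) * lam i j h * (tm (E ! e) - tm (E ! s)))
      else -\<infinity>)"

end

theory Submission
  imports Defs
begin

text \<open>Counting edges up to time b gives a cumulative count N with cnt(U, W, (a, b]) = N b - N a.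
  Hence y(s, e; h) = F e - F s for a potential F on edge positions, and any matrix of the form
  (F e - F s) + o s on and above the diagonal, -\<infinity> below it, is totally monotone: comparing two
  rows i1 < i2 in a column j, the difference of the two entries does not depend on j.\<close>

definition cnt_upto :: "'v tedge list \<Rightarrow> 'v set \<Rightarrow> 'v set \<Rightarrow> real \<Rightarrow> nat" where
  "cnt_upto E U W b = card {k. k < length E \<and>
     (case E ! k of (u, v, t) \<Rightarrow>
        u \<noteq> v \<and> t \<le> b \<and> ((u \<in> U \<and> v \<in> W) \<or> (u \<in> W \<and> v \<in> U)))}"

lemma cnt_eq_cnt_upto_diff:
  assumes "a \<le> b"
  shows "real (cnt E U W a b) = real (cnt_upto E U W b) - real (cnt_upto E U W a)"
proof -
  define joins where "joins k \<longleftrightarrow> k < length E \<and>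
     (case E ! k of (u, v, t) \<Rightarrow> u \<noteq> v \<and> ((u \<in> U \<and> v \<in> W) \<or> (u \<in> W \<and> v \<in> U)))" for k
  have upto: "cnt_upto E U W d = card {k. joins k \<and> tm (E ! k) \<le> d}" for d
    unfolding cnt_upto_def joins_def tm_def by (rule arg_cong[where f = card]) (auto split: prod.splits)
  have between: "cnt E U W a b = card {k. joins k \<and> a < tm (E ! k) \<and> tm (E ! k) \<le> b}"
    unfolding cnt_def joins_def tm_def by (rule arg_cong[where f = card]) (auto split: prod.splits)
  have "{k. joins k \<and> a < tm (E ! k) \<and> tm (E ! k) \<le> b} =
      {k. joins k \<and> tm (E ! k) \<le> b} - {k. joins k \<and> tm (E ! k) \<le> a}"
    by auto
  moreover have "{k. joins k \<and> tm (E ! k) \<le> a} \<subseteq> {k. joins k \<and> tm (E ! k) \<le> b}"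
    using assms by auto
  moreover have "finite {k. joins k \<and> tm (E ! k) \<le> b}"
    by (simp add: joins_def)
  ultimately show ?thesis
    unfolding upto between by (simp add: card_Diff_subset of_nat_diff card_mono finite_subset)
qed

definition ll_potential :: "'v tedge list \<Rightarrow> nat \<Rightarrow> (nat \<Rightarrow> 'v set) \<Rightarrow>
    (nat \<Rightarrow> nat \<Rightarrow> nat \<Rightarrow> real) \<Rightarrow> nat \<Rightarrow> nat \<Rightarrow> real" where
  "ll_potential E R P lam h e = (\<Sum>i\<in>{1..R}. \<Sum>j\<in>{i..R}.
      real (cnt_upto E (P i) (P j) (tm (E ! e))) * ln (lam i j h)
      - real (pairs_card (P i) (P j)) * lam i j h * tm (E ! e))"

lemma seg_ll_eq_potential_diff:
  assumes "chronological E" and "e < length E"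
  shows "seg_ll E R P lam h s e =
    (if s \<le> e then ereal (ll_potential E R P lam h e - ll_potential E R P lam h s) else -\<infinity>)"
proof (cases "s \<le> e")
  case True
  then have "tm (E ! s) \<le> tm (E ! e)"
    using assms sorted_nth_mono[of "map tm E" s e] by (simp add: chronological_def)
  then have "real (cnt E (P i) (P j) (tm (E ! s)) (tm (E ! e))) * ln (lam i j h)
        - real (pairs_card (P i) (P j)) * lam i j h * (tm (E ! e) - tm (E ! s))
      = (real (cnt_upto E (P i) (P j) (tm (E ! e))) * ln (lam i j h)
          - real (pairs_card (P i) (P j)) * lam i j h * tm (E ! e))
        - (real (cnt_upto E (P i) (P j) (tm (E ! s))) * ln (lam i j h)
          - real (pairs_card (P i) (P j)) * lam i j h * tm (E ! s))" for i j
    by (simp add: cnt_eq_cnt_upto_diff algebra_simps)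
  then show ?thesis
    using True by (simp add: seg_ll_def ll_potential_def sum_subtractf)
qed (simp add: seg_ll_def)

lemma totally_monotone_potential_diff:
  fixes F :: "nat \<Rightarrow> real" and ob :: "nat \<Rightarrow> ereal" and y :: "nat \<Rightarrow> nat \<Rightarrow> ereal"
  assumes y: "\<And>s e. e < n \<Longrightarrow> y s e = (if s \<le> e then ereal (F e - F s) else -\<infinity>)"
    and ob: "\<And>k. ob k \<noteq> \<infinity>"
    and "i1 < i2" and "j1 < j2" and "j2 < n"
    and less: "y i2 j1 + ob i2 > y i1 j1 + ob i1"
  shows "y i2 j2 + ob i2 \<ge> y i1 j2 + ob i1"
proof -
  have "i2 \<le> j1 \<and> ob i2 \<noteq> -\<infinity>"
    using less ob[of i2] y[of j1 i2] \<open>j1 < j2\<close> \<open>j2 < n\<close>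
    by (cases "ob i2") (auto split: if_splits)
  then obtain b where "i2 \<le> j1" and b: "ob i2 = ereal b"
    using ob[of i2] by (cases "ob i2") auto
  have entries: "y s j = ereal (F j - F s)" if "s \<le> i2" and "j \<in> {j1, j2}" for s j
    using y[of j s] that \<open>i2 \<le> j1\<close> \<open>j1 < j2\<close> \<open>j2 < n\<close> by auto
  show ?thesis
  proof (cases "ob i1")
    case (real a)
    then have "F j1 - F i2 + b > F j1 - F i1 + a"
      using less entries[of i2 j1] entries[of i1 j1] \<open>i1 < i2\<close> b by simp
    then show ?thesis
      using entries[of i2 j2] entries[of i1 j2] \<open>i1 < i2\<close> b real by simp
  qed (use ob entries[of i1 j2] \<open>i1 < i2\<close> in auto)
qed

theorem proposition5:
  fixes V :: "'v set" and i1 i2 j1 j2 :: nat and E :: "'v tedge list" and R :: nat and P :: "nat \<Rightarrow> 'v set"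
    and lam :: "nat \<Rightarrow> nat \<Rightarrow> nat \<Rightarrow> real" and h :: nat and ob :: "nat \<Rightarrow> ereal"
    and x :: "nat \<Rightarrow> nat \<Rightarrow> ereal"
  assumes "temporal_graph V E"
    and "chronological E"
    and "is_partition V R P"
    and "\<And>i j. 1 \<le> i \<Longrightarrow> i \<le> j \<Longrightarrow> j \<le> R \<Longrightarrow> lam i j h > 0"
    and "\<And>k. ob k \<noteq> \<infinity>"
    and "\<And>s e. x s e = seg_ll E R P lam h s e + ob s"
    and "i1 < i2" and "i2 < length E" and "j1 < j2" and "j2 < length E"
    and "x i2 j1 > x i1 j1"
  shows "x i2 j2 \<ge> x i1 j2"
  using totally_monotone_potential_diff[where y = "seg_ll E R P lam h"
      and F = "ll_potential E R P lam h" and n = "length E"]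
    seg_ll_eq_potential_diff[OF \<open>chronological E\<close>] assms(5-11)
  by simp

end
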